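(* For every integer $k\ge1$, in $\mathbb{Z}[q,q^{-1}][[x]]$, \[ A_k(q,x)=\sum_{i=1}^{k}\ \sum_{1=t_1<t_2<\dots<t_{i+1}=k+1}\frac{(-1)^{k+i}q^{-ik+\sum_{j=1}^{i}t_j}\,x^k}{1-x}\prod_{j=1}^{i}\left(\frac{[j]}{1-[j+1]x}\right)^{t_{j+1}-t_j}. \]
   Context: $[m]=1+q+\dots+q^{m-1}$. For $0\le k\le n$, a $\hbox{Le}$-diagram in a $k\times(n-k)$ rectangle is a pair $(\lambda,D)$ with $\lambda=(\lambda_1\ge\dots\ge\lambda_k\ge0)$, $\lambda_1\le n-k$, and $D$ a filling of the Young diagram of $\lambda$ (row $i$ has $\lambda_i$ left-justified boxes, row 1 on top) by $0$'s and $1$'s such that no $0$ has a $1$ above it in its column and a $1$ to its left in its row; its rank is its number of $1$'s. $A_{k,n}(q)=\sum q^{\mathrm{rank}}$ over such diagrams (the generating function of cells of the totally nonnegative Grassmannian $Gr^+_{k,n}$ by dimension), $A_{k,n}(q)=0$ for $n<k$, and $A_k(q,x)=\sum_{n\ge0}A_{k,n}(q)x^n$. Fractions denote inverses in the power series ring. *)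

theory Defs
  imports "HOL-Computational_Algebra.Formal_Laurent_Series"
begin

text \<open>Laurent polynomials in q are embedded into the field rat fls of formal Laurent
  series in q; the power series ring in x over it is (rat fls) fps.\<close>

text \<open>A Le-diagram in a k x (n-k) rectangle: a partition lam (rows 1..k, zero elsewhere)
  with lam 1 \<le> n-k, weakly decreasing, and the set D of cells filled with 1.\<close>

definition young_cells :: "nat \<Rightarrow> (nat \<Rightarrow> nat) \<Rightarrow> (nat \<times> nat) set" where
  "young_cells k lam = {(i, j). 1 \<le> i \<and> i \<le> k \<and> 1 \<le> j \<and> j \<le> lam i}"

definition LeDiagrams :: "nat \<Rightarrow> nat \<Rightarrow> ((nat \<Rightarrow> nat) \<times> (nat \<times> nat) set) set" where
  "LeDiagrams k n = {(lam, D).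
     k \<le> n \<and>
     (\<forall>i. (i < 1 \<or> k < i) \<longrightarrow> lam i = 0) \<and>
     (\<forall>i. 1 \<le> i \<and> i < k \<longrightarrow> lam (Suc i) \<le> lam i) \<and>
     (k \<ge> 1 \<longrightarrow> lam 1 \<le> n - k) \<and>
     D \<subseteq> young_cells k lam \<and>
     (\<forall>i j. (i, j) \<in> young_cells k lam - D \<longrightarrow>
        \<not> ((\<exists>i'. i' < i \<and> (i', j) \<in> D) \<and> (\<exists>j'. j' < j \<and> (i, j') \<in> D)))}"

definition rank_Le :: "(nat \<Rightarrow> nat) \<times> (nat \<times> nat) set \<Rightarrow> nat" where
  "rank_Le d = card (snd d)"

text \<open>A_{k,n}(q), which is 0 for n < k (the set of diagrams is then empty).\<close>
definition A_kn :: "nat \<Rightarrow> nat \<Rightarrow> rat fls" where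
  "A_kn k n = (\<Sum>d\<in>LeDiagrams k n. fls_X ^ rank_Le d)"

definition A_gf :: "nat \<Rightarrow> rat fls fps" where
  "A_gf k = Abs_fps (\<lambda>n. A_kn k n)"

definition qint :: "nat \<Rightarrow> rat fls" where
  "qint m = (\<Sum>l<m. fls_X ^ l)"

definition tseqs :: "nat \<Rightarrow> nat \<Rightarrow> (nat \<Rightarrow> nat) set" where
  "tseqs k i = {t. t 1 = 1 \<and> t (i + 1) = k + 1 \<and> (\<forall>j. 1 \<le> j \<and> j \<le> i \<longrightarrow> t j < t (Suc j))
                 \<and> (\<forall>j. (j < 1 \<or> i + 1 < j) \<longrightarrow> t j = 0)}"

end

theory Submission
  imports Defs
begin

text \<open>
  Le_poly k m sums q^rank Z^f over the Le-diagrams in a k x m rectangle, where f counts the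
  free rows: rows containing no 0 with a 1 above it, i.e. the rows that may carry a 1 in a new
  first column. Removing an empty last row or a full first column gives, with
  delta = 1 + (q - 1) Z and W = Le_poly, the recurrence
    delta W (k+1) (m+1) = column_op (W (k+1) m) + delta Z W k (m+1),
  where column_op p = qZ p(1 + qZ) + (1 - Z) p: the admissible first columns of a diagram with
  u free rows contribute column_poly u, and delta column_poly u = column_op (Z^u).

  The operator column_op has the eigenpolynomials E_j = prod_{l<j} ([l] + q^l Z) / [l+1] with
  eigenvalues [j+1] delta, and E_j(1) = 1. In this basis multiplication by Z is bidiagonal, so
  the coefficients of W k m obey a recurrence that is first order in k, and A_{k,k+m} is their
  sum. Their generating functions in x are sums of products of the factors [j]/(1 - [j+1] x)
  along lattice paths, one for each sequence t, which is the stated formula.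
\<close>

unbundle fps_syntax

lemma finite_bounded_funs_with_support:
  assumes "finite A"
  shows "finite {f :: nat \<Rightarrow> nat. (\<forall>j. j \<notin> A \<longrightarrow> f j = 0) \<and> (\<forall>j. f j \<le> N)}"
    (is "finite ?F")
proof -
  have "inj_on (\<lambda>f. restrict f A) ?F"
  proof (rule inj_onI)
    fix f g
    assume f: "f \<in> ?F" and g: "g \<in> ?F" and eq: "restrict f A = restrict g A"
    show "f = g"
    proof
      fix x
      show "f x = g x"
        using f g fun_cong[OF eq, of x] by (cases "x \<in> A") auto
    qed
  qed
  moreover have "(\<lambda>f. restrict f A) ` ?F \<subseteq> PiE A (\<lambda>_. {..N})"
    by auto
  moreover have "finite (PiE A (\<lambda>_. {..N}))"
    using assms by (simp add: finite_PiE)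
  ultimately show ?thesis
    by (meson finite_imageD finite_subset)
qed

lemma pcompose_monom:
  fixes p :: "'a::comm_ring_1 poly"
  shows "pcompose (monom c n) p = smult c (p ^ n)"
proof -
  have "pcompose ([:0, 1:] ^ n) p = p ^ n"
    by (induction n) (simp_all add: pcompose_mult pcompose_pCons pcompose_1)
  then show ?thesis
    by (simp add: monom_altdef pcompose_smult)
qed

section \<open>q-integers and the column operator\<close>

abbreviation q :: "rat fls" where "q \<equiv> fls_X"

lemma qint_0 [simp]: "qint 0 = 0"
  by (simp add: qint_def)

lemma qint_Suc: "qint (Suc j) = qint j + q ^ j"
  by (simp add: qint_def)

lemma qint_Suc_left: "qint (Suc j) = 1 + q * qint j"
  unfolding qint_def by (subst sum.lessThan_Suc_shift) (simp add: sum_distrib_left)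

lemma qint_times_q_minus_1: "qint j * (q - 1) = q ^ j - 1"
  by (induction j) (auto simp: qint_Suc algebra_simps)

lemma qint_Suc_nonzero: "qint (Suc j) \<noteq> 0"
proof -
  have "qint (Suc j) $$ 0 = 1"
    by (induction j) (simp_all add: qint_def)
  then show ?thesis by auto
qed

abbreviation Z :: "rat fls poly" where "Z \<equiv> [:0, 1:]"
abbreviation delta :: "rat fls poly" where "delta \<equiv> [:1, q - 1:]"

definition column_op :: "rat fls poly \<Rightarrow> rat fls poly" where
  "column_op p = [:0, q:] * pcompose p [:1, q:] + [:1, -1:] * p"

lemma column_op_smult: "column_op (smult c p) = smult c (column_op p)"
  by (simp only: column_op_def pcompose_smult mult_smult_right smult_add_right)

lemma column_op_sum: "column_op (\<Sum>i\<in>A. f i) = (\<Sum>i\<in>A. column_op (f i))"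
  by (simp add: column_op_def pcompose_sum sum_distrib_left sum.distrib)

lemma column_op_monom: "column_op (monom 1 u) = [:0, q:] * [:1, q:] ^ u + [:1, -1:] * monom 1 u"
  by (simp add: column_op_def pcompose_monom)

section \<open>Le-diagrams\<close>

type_synonym diagram = "(nat \<Rightarrow> nat) \<times> (nat \<times> nat) set"

lemma mem_young_cells: "(i, j) \<in> young_cells k lam \<longleftrightarrow> 1 \<le> i \<and> i \<le> k \<and> 1 \<le> j \<and> j \<le> lam i"
  by (simp add: young_cells_def)

lemma mem_LeDiagrams: "(lam, D) \<in> LeDiagrams k n \<longleftrightarrow> k \<le> n \<and>
     (\<forall>i. (i < 1 \<or> k < i) \<longrightarrow> lam i = 0) \<and>
     (\<forall>i. 1 \<le> i \<and> i < k \<longrightarrow> lam (Suc i) \<le> lam i) \<and>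
     (k \<ge> 1 \<longrightarrow> lam 1 \<le> n - k) \<and>
     D \<subseteq> young_cells k lam \<and>
     (\<forall>i j. (i, j) \<in> young_cells k lam - D \<longrightarrow>
        \<not> ((\<exists>i'. i' < i \<and> (i', j) \<in> D) \<and> (\<exists>j'. j' < j \<and> (i, j') \<in> D)))"
  unfolding LeDiagrams_def mem_Collect_eq prod.case by (rule refl)

context
  fixes lam D k n
  assumes d: "(lam, D) \<in> LeDiagrams k n"
begin

lemma LeDiagrams_le: "k \<le> n"
  using d unfolding mem_LeDiagrams by (elim conjE)

lemma LeDiagrams_outside: "i < 1 \<or> k < i \<Longrightarrow> lam i = 0"
  using d unfolding mem_LeDiagrams by (elim conjE) (erule allE, erule mp)

lemma LeDiagrams_step: "1 \<le> i \<Longrightarrow> i < k \<Longrightarrow> lam (Suc i) \<le> lam i"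
  using d unfolding mem_LeDiagrams by (elim conjE) simp

lemma LeDiagrams_first_row: "1 \<le> k \<Longrightarrow> lam 1 \<le> n - k"
  using d unfolding mem_LeDiagrams by (elim conjE) simp

lemma LeDiagrams_subset: "D \<subseteq> young_cells k lam"
  using d unfolding mem_LeDiagrams by (elim conjE)

lemma LeDiagrams_cell: "(i, j) \<in> D \<Longrightarrow> 1 \<le> i \<and> i \<le> k \<and> 1 \<le> j \<and> j \<le> lam i"
  using LeDiagrams_subset by (auto simp: mem_young_cells)

lemma LeDiagrams_Le_property:
  "(i, j) \<in> young_cells k lam \<Longrightarrow> (i, j) \<notin> D \<Longrightarrow> i' < i \<Longrightarrow> (i', j) \<in> D \<Longrightarrow> j' < j \<Longrightarrow> (i, j') \<notin> D"
  using d unfolding mem_LeDiagrams by (elim conjE) blast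

lemma LeDiagrams_mono:
  assumes "1 \<le> i" "i \<le> i'" "i' \<le> k"
  shows "lam i' \<le> lam i"
  using assms(2,3)
proof (induction i' rule: dec_induct)
  case (step m)
  then show ?case
    using LeDiagrams_step[of m] assms(1) by simp
qed simp

lemma LeDiagrams_bounded: "lam i \<le> n"
proof (cases "1 \<le> i \<and> i \<le> k")
  case True
  then have "lam i \<le> lam 1"
    using LeDiagrams_mono[of 1 i] by simp
  also have "\<dots> \<le> n - k"
    using LeDiagrams_first_row True by simp
  finally show ?thesis
    by simp
next
  case False
  then have "i < 1 \<or> k < i"
    by auto
  then show ?thesis
    using LeDiagrams_outside[of i] by simp
qed

lemma LeDiagrams_cells_bounded: "D \<subseteq> {1..k} \<times> {1..n}"
proof
  fix c
  assume "c \<in> D"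
  moreover obtain i j where "c = (i, j)"
    by (cases c)
  ultimately show "c \<in> {1..k} \<times> {1..n}"
    using LeDiagrams_cell[of i j] LeDiagrams_bounded[of i] by auto
qed

end

lemma finite_LeDiagrams: "finite (LeDiagrams k n)"
proof (rule finite_subset)
  let ?shapes = "{f :: nat \<Rightarrow> nat. (\<forall>j. j \<notin> {1..k} \<longrightarrow> f j = 0) \<and> (\<forall>j. f j \<le> n)}"
  show "LeDiagrams k n \<subseteq> ?shapes \<times> Pow ({1..k} \<times> {1..n})"
  proof (clarify)
    fix lam D
    assume d: "(lam, D) \<in> LeDiagrams k n"
    have "lam \<in> ?shapes"
      using LeDiagrams_outside[OF d] LeDiagrams_bounded[OF d] by auto
    then show "lam \<in> ?shapes \<and> D \<in> Pow ({1..k} \<times> {1..n})"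
      using LeDiagrams_cells_bounded[OF d] by simp
  qed
  show "finite (?shapes \<times> Pow ({1..k} \<times> {1..n}))"
    by (intro finite_cartesian_product finite_bounded_funs_with_support) simp_all
qed

lemma LeDiagrams_empty: "n < k \<Longrightarrow> LeDiagrams k n = {}"
  using LeDiagrams_le by fastforce

lemma LeDiagrams_0: "LeDiagrams 0 m = {(\<lambda>_. 0, {})}"
proof (intro set_eqI iffI)
  fix d
  assume "d \<in> LeDiagrams 0 m"
  moreover obtain lam D where d: "d = (lam, D)"
    by (cases d)
  ultimately have dd: "(lam, D) \<in> LeDiagrams 0 m"
    by simp
  have "lam = (\<lambda>_. 0)"
    using LeDiagrams_outside[OF dd] by (auto simp: fun_eq_iff)
  moreover have "D = {}"
    using LeDiagrams_cell[OF dd] by fastforce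
  ultimately show "d \<in> {(\<lambda>_. 0, {})}"
    using d by simp
qed (auto simp: mem_LeDiagrams young_cells_def)

section \<open>Counting Le-diagrams by rank and free rows\<close>

definition blocked_rows :: "nat \<Rightarrow> (nat \<Rightarrow> nat) \<Rightarrow> (nat \<times> nat) set \<Rightarrow> nat set" where
  "blocked_rows k lam D = {i. \<exists>j. (i, j) \<in> young_cells k lam - D \<and> (\<exists>i'<i. (i', j) \<in> D)}"

definition free_rows :: "nat \<Rightarrow> diagram \<Rightarrow> nat set" where
  "free_rows k d = {1..k} - blocked_rows k (fst d) (snd d)"

definition Le_poly :: "nat \<Rightarrow> nat \<Rightarrow> rat fls poly" where
  "Le_poly k m = (\<Sum>d\<in>LeDiagrams k (k + m). monom (q ^ rank_Le d) (card (free_rows k d)))"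

lemma A_kn_eq_poly_Le_poly: "A_kn k (k + m) = poly (Le_poly k m) 1"
  by (simp add: A_kn_def Le_poly_def poly_sum poly_monom)

lemma Le_poly_0: "Le_poly 0 m = 1"
  by (simp add: Le_poly_def LeDiagrams_0 free_rows_def rank_Le_def)

lemma young_cells_Suc: "lam (Suc k) = 0 \<Longrightarrow> young_cells (Suc k) lam = young_cells k lam"
  by (auto simp: young_cells_def le_Suc_eq)

lemma LeDiagrams_Suc_iff:
  assumes last: "lam (Suc k) = 0"
  shows "(lam, D) \<in> LeDiagrams (Suc k) (Suc k + m) \<longleftrightarrow> (lam, D) \<in> LeDiagrams k (k + m)"
proof -
  have outside: "(\<forall>i. (i < 1 \<or> Suc k < i) \<longrightarrow> lam i = 0) \<longleftrightarrow> (\<forall>i. (i < 1 \<or> k < i) \<longrightarrow> lam i = 0)"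
  proof (intro iffI allI impI)
    fix i
    assume "\<forall>i. (i < 1 \<or> Suc k < i) \<longrightarrow> lam i = 0" "i < 1 \<or> k < i"
    then show "lam i = 0"
      using last by (cases "i = Suc k") auto
  qed auto
  have step: "(\<forall>i. 1 \<le> i \<and> i < Suc k \<longrightarrow> lam (Suc i) \<le> lam i) \<longleftrightarrow> (\<forall>i. 1 \<le> i \<and> i < k \<longrightarrow> lam (Suc i) \<le> lam i)"
    using last by (auto simp: less_Suc_eq)
  have first: "(Suc k \<ge> 1 \<longrightarrow> lam 1 \<le> Suc k + m - Suc k) \<longleftrightarrow> (k \<ge> 1 \<longrightarrow> lam 1 \<le> k + m - k)"
    using last by (cases k) auto
  show ?thesis
    unfolding mem_LeDiagrams young_cells_Suc[of lam k, OF last] outside step first by simp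
qed

lemma LeDiagrams_empty_last_row:
  "LeDiagrams (Suc k) (Suc k + m) \<inter> {d. fst d (Suc k) = 0} = LeDiagrams k (k + m)"
proof (intro set_eqI iffI)
  fix d :: diagram
  obtain lam D where d: "d = (lam, D)"
    by (cases d)
  show "d \<in> LeDiagrams k (k + m)" if "d \<in> LeDiagrams (Suc k) (Suc k + m) \<inter> {d. fst d (Suc k) = 0}"
    using that LeDiagrams_Suc_iff[of lam k D m] d by simp
  show "d \<in> LeDiagrams (Suc k) (Suc k + m) \<inter> {d. fst d (Suc k) = 0}" if "d \<in> LeDiagrams k (k + m)"
    using that LeDiagrams_Suc_iff[of lam k D m] LeDiagrams_outside[of lam D k "k + m" "Suc k"] d by simp
qed

lemma blocked_rows_subset: "blocked_rows k lam D \<subseteq> {1..k}"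
  by (auto simp: blocked_rows_def mem_young_cells)

lemma card_free_rows_Suc:
  assumes "lam (Suc k) = 0"
  shows "card (free_rows (Suc k) (lam, D)) = Suc (card (free_rows k (lam, D)))"
proof -
  have "blocked_rows (Suc k) lam D = blocked_rows k lam D"
    by (simp add: blocked_rows_def young_cells_Suc[of lam k, OF assms])
  then have "free_rows (Suc k) (lam, D) = insert (Suc k) (free_rows k (lam, D))"
    using blocked_rows_subset[of k lam D] by (auto simp: free_rows_def)
  then show ?thesis
    by (simp add: free_rows_def)
qed

lemma Le_poly_Suc:
  "Le_poly (Suc k) m = Z * Le_poly k m +
     (\<Sum>d\<in>LeDiagrams (Suc k) (Suc k + m) - {d. fst d (Suc k) = 0}.
        monom (q ^ rank_Le d) (card (free_rows (Suc k) d)))"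
    (is "_ = _ + sum ?f (?L - ?E)")
proof -
  have "Le_poly (Suc k) m = sum ?f (?L \<inter> ?E) + sum ?f (?L - ?E)"
    unfolding Le_poly_def by (rule sum.Int_Diff[OF finite_LeDiagrams])
  also have "sum ?f (?L \<inter> ?E)
      = (\<Sum>d\<in>LeDiagrams k (k + m). Z * monom (q ^ rank_Le d) (card (free_rows k d)))"
    unfolding LeDiagrams_empty_last_row
  proof (rule sum.cong)
    fix d
    assume d: "d \<in> LeDiagrams k (k + m)"
    obtain lam D where "d = (lam, D)"
      by (cases d)
    with d show "?f d = Z * monom (q ^ rank_Le d) (card (free_rows k d))"
      using card_free_rows_Suc[of lam k D] LeDiagrams_outside[of lam D k "k + m" "Suc k"]
      by (simp add: monom_Suc)
  qed simp
  also have "\<dots> = Z * Le_poly k m"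
    by (simp only: Le_poly_def sum_distrib_left)
  finally show ?thesis .
qed

lemma Le_poly_Suc_0: "Le_poly (Suc k) 0 = Z * Le_poly k 0"
proof -
  have "fst d (Suc k) = 0" if d: "d \<in> LeDiagrams (Suc k) (Suc k)" for d
    using LeDiagrams_mono[of "fst d" "snd d" "Suc k" "Suc k" 1 "Suc k"]
      LeDiagrams_first_row[of "fst d" "snd d" "Suc k" "Suc k"] d
    by simp
  then have no_nonempty_last_row: "LeDiagrams (Suc k) (Suc k + 0) - {d. fst d (Suc k) = 0} = {}"
    by auto
  show ?thesis
    unfolding Le_poly_Suc[of k 0] no_nonempty_last_row by simp
qed

definition free_after :: "nat set \<Rightarrow> nat set \<Rightarrow> nat set" where
  "free_after U S = {i \<in> U. i \<in> S \<or> \<not> (\<exists>i'\<in>S. i' < i)}"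

fun column_poly :: "nat \<Rightarrow> rat fls poly" where
  "column_poly 0 = 1"
| "column_poly (Suc u) = [:1, q:] * column_poly u + (Z - 1) * monom 1 u"

lemma delta_times_column_poly: "delta * column_poly u = column_op (monom 1 u)"
  unfolding column_op_monom
proof (induction u)
  case 0
  then show ?case
    by (simp add: one_pCons)
next
  case (Suc u)
  have "delta * column_poly (Suc u) = [:1, q:] * (delta * column_poly u) + delta * (Z - 1) * monom 1 u"
    by (simp only: column_poly.simps distrib_left ac_simps)
  also have "\<dots> = [:0, q:] * [:1, q:] ^ Suc u + ([:1, q:] * [:1, -1:] + delta * (Z - 1)) * monom 1 u"
    unfolding Suc by (simp only: distrib_left distrib_right power_Suc ac_simps)
  also have "[:1, q:] * [:1, -1:] + delta * (Z - 1) = [:1, -1:] * Z"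
    by (simp add: algebra_simps one_pCons)
  finally show ?case
    by (simp add: monom_Suc mult.assoc)
qed

lemma free_after_insert_max:
  assumes "\<forall>a\<in>U. a < b" "S \<subseteq> U"
  shows "free_after (insert b U) S = (if S = {} then insert b (free_after U S) else free_after U S)"
    and "free_after (insert b U) (insert b S) = insert b (free_after U S)"
  using assms by (auto simp: free_after_def dest: less_asym)

lemma card_free_after_insert_max:
  assumes "finite U" "\<forall>a\<in>U. a < b" "S \<subseteq> U"
  shows "card (free_after (insert b U) S) = card (free_after U S) + (if S = {} then 1 else 0)"
    and "card (free_after (insert b U) (insert b S)) = Suc (card (free_after U S))"
proof -
  have fin: "finite (free_after U S)" and new: "b \<notin> free_after U S"
    using assms by (auto simp: free_after_def)
  show "card (free_after (insert b U) S) = card (free_after U S) + (if S = {} then 1 else 0)"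
    unfolding free_after_insert_max(1)[OF assms(2,3)] if_distrib[of card]
      card_insert_disjoint[OF fin new] by simp
  show "card (free_after (insert b U) (insert b S)) = Suc (card (free_after U S))"
    unfolding free_after_insert_max(2)[OF assms(2,3)] using card_insert_disjoint[OF fin new] .
qed

lemma column_poly_Suc:
  "column_poly (Suc u) = column_poly u + (monom 1 (Suc u) - monom 1 u) + [:0, q:] * column_poly u"
proof -
  have "[:1, q:] * column_poly u = column_poly u + [:0, q:] * column_poly u"
    by (simp add: one_pCons)
  moreover have "(Z - 1) * monom 1 u = monom 1 (Suc u) - monom 1 u"
    by (simp add: left_diff_distrib monom_Suc)
  ultimately show ?thesis
    by simp
qed

lemma sum_Pow_free_after:
  "finite U \<Longrightarrow> (\<Sum>S\<in>Pow U. monom (q ^ card S) (card (free_after U S))) = column_poly (card U)"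
proof (induction U rule: finite_linorder_max_induct)
  case empty
  then show ?case
    by (simp add: free_after_def)
next
  case (insert b U)
  let ?g = "\<lambda>U S. monom (q ^ card S) (card (free_after U S))"
  have "b \<notin> U"
    using insert.hyps(2) by blast
  have "(\<Sum>S\<in>Pow (insert b U). ?g (insert b U) S)
      = (\<Sum>S\<in>Pow U. ?g (insert b U) S) + (\<Sum>S\<in>insert b ` Pow U. ?g (insert b U) S)"
    unfolding Pow_insert using \<open>b \<notin> U\<close> insert.hyps(1) by (intro sum.union_disjoint) auto
  also have "(\<Sum>S\<in>insert b ` Pow U. ?g (insert b U) S) = (\<Sum>S\<in>Pow U. ?g (insert b U) (insert b S))"
    using \<open>b \<notin> U\<close> by (intro sum.reindex[unfolded comp_def]) (auto simp: inj_on_def)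
  also have "\<dots> = (\<Sum>S\<in>Pow U. [:0, q:] * ?g U S)"
  proof (rule sum.cong)
    fix S
    assume "S \<in> Pow U"
    then have "S \<subseteq> U" "finite S" "b \<notin> S"
      using insert.hyps(1) \<open>b \<notin> U\<close> finite_subset by auto
    then show "?g (insert b U) (insert b S) = [:0, q:] * ?g U S"
      using card_free_after_insert_max(2)[OF insert.hyps] by (simp add: monom_Suc smult_monom)
  qed simp
  also have "(\<Sum>S\<in>Pow U. ?g (insert b U) S)
      = (\<Sum>S\<in>Pow U. ?g U S + (if S = {} then monom 1 (Suc (card U)) - monom 1 (card U) else 0))"
    using card_free_after_insert_max[OF insert.hyps] by (intro sum.cong) (auto simp: free_after_def)
  also have "(\<Sum>S\<in>Pow U. ?g U S + (if S = {} then monom 1 (Suc (card U)) - monom 1 (card U) else 0))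
      + (\<Sum>S\<in>Pow U. [:0, q:] * ?g U S)
      = column_poly (Suc (card U))"
    unfolding column_poly_Suc insert.IH[symmetric] using insert.hyps(1)
    by (simp add: sum.distrib sum_distrib_left)
  finally show ?case
    using insert.hyps(1) \<open>b \<notin> U\<close> by simp
qed

definition add_column_shape :: "nat \<Rightarrow> (nat \<Rightarrow> nat) \<Rightarrow> nat \<Rightarrow> nat" where
  "add_column_shape K lam = (\<lambda>i. if 1 \<le> i \<and> i \<le> K then Suc (lam i) else 0)"

definition add_column_cells :: "(nat \<times> nat) set \<Rightarrow> nat set \<Rightarrow> (nat \<times> nat) set" where
  "add_column_cells D S = (\<lambda>(i, j). (i, Suc j)) ` D \<union> (\<lambda>i. (i, 1)) ` S"

definition drop_column_shape :: "(nat \<Rightarrow> nat) \<Rightarrow> nat \<Rightarrow> nat" where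
  "drop_column_shape lam = (\<lambda>i. lam i - 1)"

definition drop_column_cells :: "(nat \<times> nat) set \<Rightarrow> (nat \<times> nat) set" where
  "drop_column_cells D = {(i, j). 1 \<le> j \<and> (i, Suc j) \<in> D}"

definition first_column :: "(nat \<times> nat) set \<Rightarrow> nat set" where
  "first_column D = {i. (i, 1) \<in> D}"

lemma not_mem_add_column_cells_0: "(i, 0) \<notin> add_column_cells D S"
  by (auto simp: add_column_cells_def)

lemma mem_add_column_cells_1: "(i, Suc 0) \<in> add_column_cells D S \<longleftrightarrow> i \<in> S \<or> (i, 0) \<in> D"
  by (force simp: add_column_cells_def)

lemma mem_add_column_cells_Suc: "1 \<le> j \<Longrightarrow> (i, Suc j) \<in> add_column_cells D S \<longleftrightarrow> (i, j) \<in> D"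
  by (force simp: add_column_cells_def)

lemma LeDiagrams_not_mem_column_0: "(lam, D) \<in> LeDiagrams k n \<Longrightarrow> (i, 0) \<notin> D"
  using LeDiagrams_cell by fastforce

lemma add_column_Le_property:
  assumes d: "(lam, D) \<in> LeDiagrams K n" and S: "S \<subseteq> free_rows K (lam, D)"
    and cell: "(i, j) \<in> young_cells K (add_column_shape K lam) - add_column_cells D S"
    and one_above: "i' < i" "(i', j) \<in> add_column_cells D S"
    and one_left: "j' < j" "(i, j') \<in> add_column_cells D S"
  shows False
proof -
  have "j' \<noteq> 0"
    using one_left(2) not_mem_add_column_cells_0 by metis
  with one_left obtain j0 where j0: "j = Suc j0" "1 \<le> j0"
    by (cases j) auto
  have zero: "(i, j0) \<in> young_cells K lam" "(i, j0) \<notin> D"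
    using cell j0 mem_add_column_cells_Suc[OF j0(2)]
    by (auto simp: mem_young_cells add_column_shape_def split: if_splits)
  have one_above': "(i', j0) \<in> D"
    using one_above(2) mem_add_column_cells_Suc[OF j0(2)] j0 by simp
  show False
  proof (cases "j' = Suc 0")
    case True
    then have "i \<in> S"
      using one_left(2) mem_add_column_cells_1 LeDiagrams_not_mem_column_0[OF d] by simp
    moreover have "i \<in> blocked_rows K lam D"
      unfolding blocked_rows_def using zero one_above' one_above(1) by blast
    ultimately show False
      using S by (auto simp: free_rows_def)
  next
    case False
    with \<open>j' \<noteq> 0\<close> obtain j1 where j1: "j' = Suc j1" "1 \<le> j1"
      by (cases j') auto
    have "(i, j1) \<in> D"
      using one_left(2) mem_add_column_cells_Suc[OF j1(2)] j1 by simp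
    then show False
      using LeDiagrams_Le_property[OF d zero one_above(1) one_above'] one_left(1) j0 j1 by simp
  qed
qed

lemma add_column_LeDiagrams:
  assumes d: "(lam, D) \<in> LeDiagrams K (K + m)" and S: "S \<subseteq> free_rows K (lam, D)" and K: "1 \<le> K"
  shows "(add_column_shape K lam, add_column_cells D S) \<in> LeDiagrams K (K + Suc m)"
  unfolding mem_LeDiagrams
proof (intro conjI allI impI)
  fix i
  show "add_column_shape K lam i = 0" if "i < 1 \<or> K < i"
    using that by (auto simp: add_column_shape_def)
  show "add_column_shape K lam (Suc i) \<le> add_column_shape K lam i" if "1 \<le> i \<and> i < K"
    using that LeDiagrams_step[OF d, of i] by (auto simp: add_column_shape_def)
next
  show "add_column_shape K lam 1 \<le> K + Suc m - K"
    using LeDiagrams_first_row[OF d] K by (simp add: add_column_shape_def)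
  show "add_column_cells D S \<subseteq> young_cells K (add_column_shape K lam)"
    using LeDiagrams_cell[OF d] S
    by (auto simp: add_column_cells_def add_column_shape_def mem_young_cells free_rows_def)
  fix i j
  show "\<not> ((\<exists>i'. i' < i \<and> (i', j) \<in> add_column_cells D S)
      \<and> (\<exists>j'. j' < j \<and> (i, j') \<in> add_column_cells D S))"
    if "(i, j) \<in> young_cells K (add_column_shape K lam) - add_column_cells D S"
    using add_column_Le_property[OF d S that] by blast
qed simp

context
  fixes lam D K m
  assumes d: "(lam, D) \<in> LeDiagrams K (K + Suc m)"
begin

lemma drop_column_Le_property:
  assumes "(i, j) \<in> young_cells K (drop_column_shape lam)" "(i, j) \<notin> drop_column_cells D"
    "i' < i" "(i', j) \<in> drop_column_cells D" "j' \<le> j" "(i, j') \<in> D"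
  shows False
proof -
  have "(i, Suc j) \<in> young_cells K lam" "(i, Suc j) \<notin> D" "(i', Suc j) \<in> D"
    using assms(1,2,4) by (auto simp: mem_young_cells drop_column_shape_def drop_column_cells_def)
  then show False
    using LeDiagrams_Le_property[OF d _ _ assms(3)] assms(5,6) by (meson le_imp_less_Suc)
qed

lemma drop_column_LeDiagrams:
  "1 \<le> K \<Longrightarrow> (drop_column_shape lam, drop_column_cells D) \<in> LeDiagrams K (K + m)"
  unfolding mem_LeDiagrams
proof (intro conjI allI impI)
  fix i
  show "drop_column_shape lam i = 0" if "i < 1 \<or> K < i"
    using that LeDiagrams_outside[OF d, of i] by (simp add: drop_column_shape_def)
  show "drop_column_shape lam (Suc i) \<le> drop_column_shape lam i" if "1 \<le> i \<and> i < K"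
    using that LeDiagrams_step[OF d, of i] by (simp add: drop_column_shape_def)
next
  show "drop_column_shape lam 1 \<le> K + m - K" if "1 \<le> K"
    using that LeDiagrams_first_row[OF d] by (simp add: drop_column_shape_def)
  show "drop_column_cells D \<subseteq> young_cells K (drop_column_shape lam)"
  proof clarify
    fix i j
    assume "(i, j) \<in> drop_column_cells D"
    then have "1 \<le> j" "(i, Suc j) \<in> D"
      by (simp_all add: drop_column_cells_def)
    then show "(i, j) \<in> young_cells K (drop_column_shape lam)"
      using LeDiagrams_cell[OF d] by (force simp: drop_column_shape_def mem_young_cells)
  qed
  fix i j
  show "\<not> ((\<exists>i'. i' < i \<and> (i', j) \<in> drop_column_cells D)
      \<and> (\<exists>j'. j' < j \<and> (i, j') \<in> drop_column_cells D))"
    if "(i, j) \<in> young_cells K (drop_column_shape lam) - drop_column_cells D"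
    using that drop_column_Le_property[of i j _ "Suc _"] by (auto simp: drop_column_cells_def Suc_le_eq)
qed simp

lemma first_column_subset_free_rows:
  "first_column D \<subseteq> free_rows K (drop_column_shape lam, drop_column_cells D)"
proof
  fix i
  assume "i \<in> first_column D"
  then have i: "(i, 1) \<in> D"
    by (simp add: first_column_def)
  have "i \<notin> blocked_rows K (drop_column_shape lam) (drop_column_cells D)"
    using drop_column_Le_property[of i _ _ 1] i by (auto simp: blocked_rows_def mem_young_cells)
  then show "i \<in> free_rows K (drop_column_shape lam, drop_column_cells D)"
    using LeDiagrams_cell[OF d i] by (simp add: free_rows_def)
qed

end

context
  fixes lam D K n
  assumes d: "(lam, D) \<in> LeDiagrams K n"
begin

lemma drop_add_column:
  shows "drop_column_shape (add_column_shape K lam) = lam"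
    and "drop_column_cells (add_column_cells D S) = D"
    and "first_column (add_column_cells D S) = S"
proof -
  show "drop_column_shape (add_column_shape K lam) = lam"
  proof
    fix i
    show "drop_column_shape (add_column_shape K lam) i = lam i"
      using LeDiagrams_outside[OF d, of i] by (auto simp: drop_column_shape_def add_column_shape_def)
  qed
  have "(i, j) \<in> drop_column_cells (add_column_cells D S) \<longleftrightarrow> (i, j) \<in> D" for i j
    using mem_add_column_cells_Suc[of j i D S] LeDiagrams_not_mem_column_0[OF d, of i]
    by (cases j) (auto simp: drop_column_cells_def)
  then show "drop_column_cells (add_column_cells D S) = D"
    by auto
  show "first_column (add_column_cells D S) = S"
    using LeDiagrams_not_mem_column_0[OF d] mem_add_column_cells_1 by (simp add: first_column_def)
qed

lemma add_drop_column:
  assumes "lam K \<noteq> 0"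
  shows "add_column_shape K (drop_column_shape lam) = lam"
    and "add_column_cells (drop_column_cells D) (first_column D) = D"
proof -
  show "add_column_shape K (drop_column_shape lam) = lam"
  proof
    fix i
    show "add_column_shape K (drop_column_shape lam) i = lam i"
    proof (cases "1 \<le> i \<and> i \<le> K")
      case True
      then have "lam K \<le> lam i"
        using LeDiagrams_mono[OF d, of i K] by simp
      then show ?thesis
        using True assms by (simp add: add_column_shape_def drop_column_shape_def)
    next
      case False
      then have "i < 1 \<or> K < i"
        by auto
      then show ?thesis
        using LeDiagrams_outside[OF d, of i] False by (simp add: add_column_shape_def)
    qed
  qed
  have "(i, j) \<in> add_column_cells (drop_column_cells D) (first_column D) \<longleftrightarrow> (i, j) \<in> D" for i j
  proof (cases j)
    case 0
    then show ?thesis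
      using not_mem_add_column_cells_0 LeDiagrams_not_mem_column_0[OF d] by simp
  next
    case (Suc j0)
    then show ?thesis
      using mem_add_column_cells_1 mem_add_column_cells_Suc[of j0]
      by (cases j0) (simp_all add: first_column_def drop_column_cells_def)
  qed
  then show "add_column_cells (drop_column_cells D) (first_column D) = D"
    by auto
qed

lemma card_add_column_cells:
  assumes "finite S"
  shows "card (add_column_cells D S) = card D + card S"
proof -
  have "finite D"
    using LeDiagrams_cells_bounded[OF d] finite_subset by blast
  moreover have "(\<lambda>(i, j). (i, Suc j)) ` D \<inter> (\<lambda>i. (i, 1)) ` S = {}"
    using LeDiagrams_not_mem_column_0[OF d] by auto
  moreover have "inj_on (\<lambda>(i, j). (i, Suc j)) D" "inj_on (\<lambda>i. (i, 1::nat)) S"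
    by (auto simp: inj_on_def)
  ultimately show ?thesis
    using assms by (simp add: add_column_cells_def card_Un_disjoint card_image)
qed

lemma blocked_rows_add_column_subset:
  "blocked_rows K (add_column_shape K lam) (add_column_cells D S)
     \<subseteq> blocked_rows K lam D \<union> {i. 1 \<le> i \<and> i \<le> K \<and> i \<notin> S \<and> (\<exists>i'\<in>S. i' < i)}"
proof
  fix i
  assume "i \<in> blocked_rows K (add_column_shape K lam) (add_column_cells D S)"
  then obtain j i' where cell: "(i, j) \<in> young_cells K (add_column_shape K lam)"
    and zero: "(i, j) \<notin> add_column_cells D S"
    and one_above: "i' < i" "(i', j) \<in> add_column_cells D S"
    by (auto simp: blocked_rows_def)
  have i: "1 \<le> i" "i \<le> K" "1 \<le> j" "j \<le> Suc (lam i)"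
    using cell by (auto simp: mem_young_cells add_column_shape_def split: if_splits)
  show "i \<in> blocked_rows K lam D \<union> {i. 1 \<le> i \<and> i \<le> K \<and> i \<notin> S \<and> (\<exists>i'\<in>S. i' < i)}"
  proof (cases "j = Suc 0")
    case True
    then have "i \<notin> S" "i' \<in> S"
      using zero one_above(2) mem_add_column_cells_1 LeDiagrams_not_mem_column_0[OF d] by auto
    then show ?thesis
      using i one_above(1) by auto
  next
    case False
    then obtain j0 where j0: "j = Suc j0" "1 \<le> j0"
      using i by (cases j) auto
    have "(i, j0) \<in> young_cells K lam" "(i, j0) \<notin> D" "(i', j0) \<in> D"
      using i j0 zero one_above(2) mem_add_column_cells_Suc[OF j0(2)] by (auto simp: mem_young_cells)
    then show ?thesis
      using one_above(1) unfolding blocked_rows_def by blast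
  qed
qed

lemma blocked_rows_add_column_supset:
  "blocked_rows K lam D \<union> {i. 1 \<le> i \<and> i \<le> K \<and> i \<notin> S \<and> (\<exists>i'\<in>S. i' < i)}
     \<subseteq> blocked_rows K (add_column_shape K lam) (add_column_cells D S)"
proof
  fix i
  assume "i \<in> blocked_rows K lam D \<union> {i. 1 \<le> i \<and> i \<le> K \<and> i \<notin> S \<and> (\<exists>i'\<in>S. i' < i)}"
  then consider "i \<in> blocked_rows K lam D" | "1 \<le> i" "i \<le> K" "i \<notin> S" "\<exists>i'\<in>S. i' < i"
    by auto
  then show "i \<in> blocked_rows K (add_column_shape K lam) (add_column_cells D S)"
  proof cases
    case 1
    then obtain j i' where cell: "(i, j) \<in> young_cells K lam" and "(i, j) \<notin> D" "i' < i" "(i', j) \<in> D"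
      by (auto simp: blocked_rows_def)
    moreover have "1 \<le> j"
      using cell by (simp add: mem_young_cells)
    moreover have "(i, Suc j) \<in> young_cells K (add_column_shape K lam)"
      using cell by (auto simp: mem_young_cells add_column_shape_def)
    ultimately show ?thesis
      using mem_add_column_cells_Suc unfolding blocked_rows_def by blast
  next
    case 2
    then obtain i' where "i' \<in> S" "i' < i"
      by auto
    moreover have "(i, Suc 0) \<in> young_cells K (add_column_shape K lam)"
      using 2 by (auto simp: mem_young_cells add_column_shape_def)
    moreover have "(i, Suc 0) \<notin> add_column_cells D S"
      using 2 mem_add_column_cells_1 LeDiagrams_not_mem_column_0[OF d] by auto
    ultimately show ?thesis
      using mem_add_column_cells_1 unfolding blocked_rows_def by blast
  qed
qed

lemma free_rows_add_column:
  assumes "S \<subseteq> free_rows K (lam, D)"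
  shows "free_rows K (add_column_shape K lam, add_column_cells D S)
       = free_after (free_rows K (lam, D)) S"
proof -
  have "blocked_rows K (add_column_shape K lam) (add_column_cells D S)
     = blocked_rows K lam D \<union> {i. 1 \<le> i \<and> i \<le> K \<and> i \<notin> S \<and> (\<exists>i'\<in>S. i' < i)}"
    using blocked_rows_add_column_subset blocked_rows_add_column_supset by (rule equalityI)
  then show ?thesis
    using assms by (auto simp: free_rows_def free_after_def)
qed

end

definition add_column :: "nat \<Rightarrow> diagram \<times> nat set \<Rightarrow> diagram" where
  "add_column K = (\<lambda>((lam, D), S). (add_column_shape K lam, add_column_cells D S))"

definition drop_column :: "diagram \<Rightarrow> diagram \<times> nat set" where
  "drop_column = (\<lambda>(lam, D). ((drop_column_shape lam, drop_column_cells D), first_column D))"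

lemma bij_betw_add_column:
  assumes "1 \<le> K"
  shows "bij_betw (add_column K) (Sigma (LeDiagrams K (K + m)) (\<lambda>d. Pow (free_rows K d)))
           (LeDiagrams K (K + Suc m) - {d. fst d K = 0})"
proof (rule bij_betw_byWitness[where f' = drop_column])
  show "\<forall>p\<in>Sigma (LeDiagrams K (K + m)) (\<lambda>d. Pow (free_rows K d)). drop_column (add_column K p) = p"
    using drop_add_column by (auto simp: add_column_def drop_column_def)
  show "\<forall>d\<in>LeDiagrams K (K + Suc m) - {d. fst d K = 0}. add_column K (drop_column d) = d"
    using add_drop_column by (auto simp: add_column_def drop_column_def)
  show "add_column K ` Sigma (LeDiagrams K (K + m)) (\<lambda>d. Pow (free_rows K d))
      \<subseteq> LeDiagrams K (K + Suc m) - {d. fst d K = 0}"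
    using add_column_LeDiagrams assms by (auto simp: add_column_def add_column_shape_def)
  show "drop_column ` (LeDiagrams K (K + Suc m) - {d. fst d K = 0})
      \<subseteq> Sigma (LeDiagrams K (K + m)) (\<lambda>d. Pow (free_rows K d))"
  proof
    fix p
    assume "p \<in> drop_column ` (LeDiagrams K (K + Suc m) - {d. fst d K = 0})"
    then obtain lam D where d: "(lam, D) \<in> LeDiagrams K (K + Suc m)" and p: "p = drop_column (lam, D)"
      by auto
    then show "p \<in> Sigma (LeDiagrams K (K + m)) (\<lambda>d. Pow (free_rows K d))"
      using drop_column_LeDiagrams[OF d assms] first_column_subset_free_rows[OF d]
      by (simp add: drop_column_def)
  qed
qed

lemma sum_full_first_column:
  assumes "1 \<le> K"
  shows "(\<Sum>d\<in>LeDiagrams K (K + Suc m) - {d. fst d K = 0}. monom (q ^ rank_Le d) (card (free_rows K d)))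
    = (\<Sum>d\<in>LeDiagrams K (K + m). smult (q ^ rank_Le d) (column_poly (card (free_rows K d))))"
proof -
  let ?L = "LeDiagrams K (K + m)"
  let ?h = "\<lambda>d S. monom (q ^ rank_Le d * q ^ card S) (card (free_after (free_rows K d) S))"
  have "(\<Sum>d\<in>LeDiagrams K (K + Suc m) - {d. fst d K = 0}. monom (q ^ rank_Le d) (card (free_rows K d)))
      = (\<Sum>(d, S)\<in>Sigma ?L (\<lambda>d. Pow (free_rows K d)). ?h d S)"
  proof (rule sum.reindex_bij_betw[OF bij_betw_add_column[OF assms], symmetric, THEN trans],
      rule sum.cong)
    fix p
    assume "p \<in> Sigma ?L (\<lambda>d. Pow (free_rows K d))"
    moreover obtain lam D S where p: "p = ((lam, D), S)"
      by (cases p) auto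
    ultimately have L: "(lam, D) \<in> ?L" and S: "S \<subseteq> free_rows K (lam, D)"
      by auto
    moreover have "finite S"
      using S finite_subset by (auto simp: free_rows_def)
    ultimately show "monom (q ^ rank_Le (add_column K p)) (card (free_rows K (add_column K p)))
        = (case p of (d, S) \<Rightarrow> ?h d S)"
      using p free_rows_add_column[OF L S] card_add_column_cells[OF L]
      by (simp add: add_column_def rank_Le_def power_add)
  qed simp
  also have "\<dots> = (\<Sum>d\<in>?L. \<Sum>S\<in>Pow (free_rows K d). ?h d S)"
    by (rule sum.Sigma[symmetric]) (auto simp: finite_LeDiagrams free_rows_def)
  also have "\<dots> = (\<Sum>d\<in>?L. smult (q ^ rank_Le d) (column_poly (card (free_rows K d))))"
  proof (rule sum.cong)
    fix d
    have "(\<Sum>S\<in>Pow (free_rows K d). ?h d S)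
        = [:q ^ rank_Le d:]
          * (\<Sum>S\<in>Pow (free_rows K d). monom (q ^ card S) (card (free_after (free_rows K d) S)))"
      by (simp add: sum_distrib_left smult_monom)
    then show "(\<Sum>S\<in>Pow (free_rows K d). ?h d S)
        = smult (q ^ rank_Le d) (column_poly (card (free_rows K d)))"
      by (simp add: sum_Pow_free_after free_rows_def)
  qed simp
  finally show ?thesis .
qed

lemma Le_poly_Suc_Suc:
  "delta * Le_poly (Suc k) (Suc m) = column_op (Le_poly (Suc k) m) + delta * (Z * Le_poly k (Suc m))"
proof -
  let ?L = "LeDiagrams (Suc k) (Suc k + m)"
  let ?column = "\<Sum>d\<in>?L. smult (q ^ rank_Le d) (column_poly (card (free_rows (Suc k) d)))"
  have "column_op (Le_poly (Suc k) m)
      = (\<Sum>d\<in>?L. smult (q ^ rank_Le d) (column_op (monom 1 (card (free_rows (Suc k) d)))))"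
    unfolding Le_poly_def column_op_sum by (simp add: smult_monom flip: column_op_smult)
  also have "\<dots> = delta * ?column"
    by (simp only: sum_distrib_left mult_smult_right delta_times_column_poly)
  finally have column_op_eq: "column_op (Le_poly (Suc k) m) = delta * ?column" .
  have full: "(\<Sum>d\<in>LeDiagrams (Suc k) (Suc k + Suc m) - {d. fst d (Suc k) = 0}.
      monom (q ^ rank_Le d) (card (free_rows (Suc k) d))) = ?column"
    by (rule sum_full_first_column) simp
  show ?thesis
    unfolding Le_poly_Suc[of k "Suc m"] full column_op_eq by (simp add: algebra_simps)
qed

section \<open>The eigenbasis of the column operator\<close>

definition eigen_factor :: "nat \<Rightarrow> rat fls poly" where
  "eigen_factor j = [:qint j, q ^ j:]"

fun eigenpoly :: "nat \<Rightarrow> rat fls poly" where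
  "eigenpoly 0 = 1"
| "eigenpoly (Suc j) = smult (inverse (qint (Suc j))) (eigen_factor j * eigenpoly j)"

lemma eigen_factor_pcompose: "pcompose (eigen_factor j) [:1, q:] = eigen_factor (Suc j)"
  by (simp add: eigen_factor_def pcompose_pCons qint_Suc algebra_simps)

declare eigenpoly.simps(2) [simp del]

lemma Z_times_eigenpoly_pcompose: "Z * pcompose (eigenpoly j) [:1, q:] = eigen_factor j * eigenpoly j"
proof (induction j)
  case 0
  then show ?case by (simp add: eigen_factor_def pcompose_1)
next
  case (Suc j)
  have "pcompose (eigenpoly (Suc j)) [:1, q:]
      = smult (inverse (qint (Suc j))) (eigen_factor (Suc j) * pcompose (eigenpoly j) [:1, q:])"
    by (simp only: eigenpoly.simps pcompose_mult pcompose_smult eigen_factor_pcompose)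
  then have "Z * pcompose (eigenpoly (Suc j)) [:1, q:]
      = smult (inverse (qint (Suc j))) (eigen_factor (Suc j) * (Z * pcompose (eigenpoly j) [:1, q:]))"
    by (simp add: ac_simps)
  also have "\<dots> = eigen_factor (Suc j) * eigenpoly (Suc j)"
    using Suc by (simp add: ac_simps eigenpoly.simps)
  finally show ?case .
qed

lemma column_op_eigenpoly: "column_op (eigenpoly j) = smult (qint (Suc j)) (delta * eigenpoly j)"
proof -
  have "[:0, q:] * pcompose (eigenpoly j) [:1, q:] = smult q (Z * pcompose (eigenpoly j) [:1, q:])"
    by simp
  also have "\<dots> = smult q (eigen_factor j) * eigenpoly j"
    by (simp only: Z_times_eigenpoly_pcompose mult_smult_left)
  finally have "column_op (eigenpoly j) = (smult q (eigen_factor j) + [:1, -1:]) * eigenpoly j"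
    by (simp add: column_op_def algebra_simps)
  also have "smult q (eigen_factor j) + [:1, -1:] = smult (qint (Suc j)) delta"
    using qint_times_q_minus_1[of "Suc j"] by (simp add: eigen_factor_def qint_Suc_left algebra_simps)
  finally show ?thesis
    by (simp only: mult_smult_left)
qed

lemma poly_eigenpoly_1: "poly (eigenpoly j) 1 = 1"
  by (induction j) (simp_all add: eigen_factor_def eigenpoly.simps qint_Suc_nonzero flip: qint_Suc)

definition up_coeff :: "nat \<Rightarrow> rat fls" where
  "up_coeff j = fls_X_intpow (1 - int j) * qint j"

definition stay_coeff :: "nat \<Rightarrow> rat fls" where
  "stay_coeff j = - (fls_X_intpow (- int j) * qint j)"

lemma up_coeff_0 [simp]: "up_coeff 0 = 0"
  and stay_coeff_0 [simp]: "stay_coeff 0 = 0"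
  by (simp_all add: up_coeff_def stay_coeff_def)

lemma Z_times_eigenpoly:
  "Z * eigenpoly j = smult (up_coeff (Suc j)) (eigenpoly (Suc j)) + smult (stay_coeff j) (eigenpoly j)"
proof -
  have q_inverse: "fls_X_intpow (- int j) * q ^ j = 1"
    using fls_X_intpow_times_fls_X_intpow[of "- int j" "int j"]
    by (simp only: fls_X_power_conv_shift_1) simp
  have "smult (up_coeff (Suc j)) (eigenpoly (Suc j))
      = smult (fls_X_intpow (- int j) * (qint (Suc j) * inverse (qint (Suc j))))
          (eigen_factor j * eigenpoly j)"
    by (simp add: up_coeff_def algebra_simps eigenpoly.simps)
  also have "\<dots> = smult (fls_X_intpow (- int j)) (eigen_factor j * eigenpoly j)"
    using qint_Suc_nonzero[of j] by simp
  also have "eigen_factor j = [:qint j:] + smult (q ^ j) Z"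
    by (simp add: eigen_factor_def)
  also have "smult (fls_X_intpow (- int j)) (([:qint j:] + smult (q ^ j) Z) * eigenpoly j)
     = smult (fls_X_intpow (- int j) * qint j) (eigenpoly j)
       + smult (fls_X_intpow (- int j) * q ^ j) (Z * eigenpoly j)"
    by (simp add: algebra_simps smult_add_right)
  finally show ?thesis
    using q_inverse by (simp add: stay_coeff_def)
qed

(* At j = 0 the truncated index j - 1 is harmless because up_coeff 0 = 0. *)
fun eig_coeff :: "nat \<Rightarrow> nat \<Rightarrow> nat \<Rightarrow> rat fls" where
  "eig_coeff 0 m j = (if j = 0 then 1 else 0)"
| "eig_coeff (Suc k) 0 j = up_coeff j * eig_coeff k 0 (j - 1) + stay_coeff j * eig_coeff k 0 j"
| "eig_coeff (Suc k) (Suc m) j = qint (Suc j) * eig_coeff (Suc k) m j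
     + up_coeff j * eig_coeff k (Suc m) (j - 1) + stay_coeff j * eig_coeff k (Suc m) j"

lemma eig_coeff_eq_0: "k < j \<Longrightarrow> eig_coeff k m j = 0"
  by (induction k m j rule: eig_coeff.induct) auto

lemma Z_times_eigen_sum:
  assumes "b (Suc k) = 0"
  shows "Z * (\<Sum>j\<le>k. smult (b j) (eigenpoly j))
       = (\<Sum>j\<le>Suc k. smult (up_coeff j * b (j - 1) + stay_coeff j * b j) (eigenpoly j))"
proof -
  have "Z * (\<Sum>j\<le>k. smult (b j) (eigenpoly j)) = (\<Sum>j\<le>k. smult (b j) (Z * eigenpoly j))"
    by (simp only: sum_distrib_left mult_smult_right)
  also have "\<dots> = (\<Sum>j\<le>k. smult (up_coeff (Suc j) * b j) (eigenpoly (Suc j)))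
                 + (\<Sum>j\<le>k. smult (stay_coeff j * b j) (eigenpoly j))"
    by (simp only: Z_times_eigenpoly smult_add_right sum.distrib smult_smult) (simp only: mult.commute)
  also have "(\<Sum>j\<le>k. smult (up_coeff (Suc j) * b j) (eigenpoly (Suc j)))
           = (\<Sum>j\<le>Suc k. smult (up_coeff j * b (j - 1)) (eigenpoly j))"
    by (subst sum.atMost_Suc_shift) simp
  also have "(\<Sum>j\<le>k. smult (stay_coeff j * b j) (eigenpoly j))
           = (\<Sum>j\<le>Suc k. smult (stay_coeff j * b j) (eigenpoly j))"
    using assms by simp
  finally show ?thesis
    by (simp add: sum.distrib smult_add_left)
qed

lemma column_op_eigen_sum:
  "column_op (\<Sum>j\<le>k. smult (a j) (eigenpoly j))
     = delta * (\<Sum>j\<le>k. smult (qint (Suc j) * a j) (eigenpoly j))"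
  by (simp add: column_op_sum column_op_smult column_op_eigenpoly sum_distrib_left mult_smult_right
      mult.commute)

lemma eigen_expansion:
  fixes W :: "nat \<Rightarrow> nat \<Rightarrow> rat fls poly"
  assumes W_0: "\<And>m. W 0 m = 1"
    and W_Suc_0: "\<And>k. W (Suc k) 0 = Z * W k 0"
    and W_Suc_Suc:
      "\<And>k m. delta * W (Suc k) (Suc m) = column_op (W (Suc k) m) + delta * (Z * W k (Suc m))"
  shows "W k m = (\<Sum>j\<le>k. smult (eig_coeff k m j) (eigenpoly j))"
proof (induction k arbitrary: m)
  case 0
  then show ?case by (simp add: W_0)
next
  case (Suc k)
  note IH_k = Suc.IH
  show ?case
  proof (induction m)
    case 0
    show ?case
      unfolding W_Suc_0 IH_k by (subst Z_times_eigen_sum) (auto simp: eig_coeff_eq_0)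
  next
    case (Suc m)
    have "delta * W (Suc k) (Suc m)
        = delta * (\<Sum>j\<le>Suc k. smult (qint (Suc j) * eig_coeff (Suc k) m j) (eigenpoly j))
        + delta * (\<Sum>j\<le>Suc k. smult (up_coeff j * eig_coeff k (Suc m) (j - 1)
                                      + stay_coeff j * eig_coeff k (Suc m) j) (eigenpoly j))"
      unfolding W_Suc_Suc Suc.IH IH_k[of "Suc m"] column_op_eigen_sum
      by (subst Z_times_eigen_sum) (auto simp: eig_coeff_eq_0)
    also have "\<dots> = delta * (\<Sum>j\<le>Suc k. smult (eig_coeff (Suc k) (Suc m) j) (eigenpoly j))"
      by (simp add: smult_add_left sum.distrib algebra_simps)
    finally show ?case
      by (rule mult_left_cancel[THEN iffD1, rotated]) simp
  qed
qed

lemma Le_poly_eq_eigen_sum: "Le_poly k m = (\<Sum>j\<le>k. smult (eig_coeff k m j) (eigenpoly j))"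
  by (rule eigen_expansion[where W = Le_poly, OF Le_poly_0 Le_poly_Suc_0 Le_poly_Suc_Suc])

lemma A_kn_eq_eig_coeff_sum: "A_kn k (k + m) = (\<Sum>j\<le>k. eig_coeff k m j)"
  by (simp add: A_kn_eq_poly_Le_poly Le_poly_eq_eigen_sum poly_sum poly_eigenpoly_1)

section \<open>Generating functions in x\<close>

definition eig_coeff_gf :: "nat \<Rightarrow> nat \<Rightarrow> rat fls fps" where
  "eig_coeff_gf k j = Abs_fps (\<lambda>m. eig_coeff k m j)"

abbreviation geo_factor :: "nat \<Rightarrow> rat fls fps" where
  "geo_factor j \<equiv> inverse (1 - fps_const (qint (Suc j)) * fps_X)"

lemma eig_coeff_gf_0: "eig_coeff_gf 0 j = (if j = 0 then inverse (1 - fps_X) else 0)"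
proof -
  have "inverse (1 - fps_X) = inverse (inverse (Abs_fps (\<lambda>n. 1 :: rat fls)))"
    by (simp add: fps_inverse_gp')
  also have "\<dots> = Abs_fps (\<lambda>n. 1)"
    by (rule fps_inverse_idempotent) simp
  finally show ?thesis
    by (auto simp: eig_coeff_gf_def fps_eq_iff)
qed

lemma eig_coeff_gf_Suc:
  "eig_coeff_gf (Suc k) j
     = geo_factor j
       * (fps_const (up_coeff j) * eig_coeff_gf k (j - 1) + fps_const (stay_coeff j) * eig_coeff_gf k j)"
proof -
  have recurrence: "(1 - fps_const (qint (Suc j)) * fps_X) * eig_coeff_gf (Suc k) j
      = fps_const (up_coeff j) * eig_coeff_gf k (j - 1) + fps_const (stay_coeff j) * eig_coeff_gf k j"
  proof (rule fps_ext)
    fix n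
    show "((1 - fps_const (qint (Suc j)) * fps_X) * eig_coeff_gf (Suc k) j) $ n
        = (fps_const (up_coeff j) * eig_coeff_gf k (j - 1)
           + fps_const (stay_coeff j) * eig_coeff_gf k j) $ n"
      by (cases n) (simp_all add: eig_coeff_gf_def algebra_simps)
  qed
  have "geo_factor j * (1 - fps_const (qint (Suc j)) * fps_X) = 1"
    by (rule inverse_mult_eq_1) simp
  then have "eig_coeff_gf (Suc k) j
      = geo_factor j * ((1 - fps_const (qint (Suc j)) * fps_X) * eig_coeff_gf (Suc k) j)"
    by (simp add: mult.assoc[symmetric])
  then show ?thesis
    by (simp only: recurrence)
qed

lemma tseqs_outside: "t \<in> tseqs k i \<Longrightarrow> j < 1 \<or> i + 1 < j \<Longrightarrow> t j = 0"
  unfolding tseqs_def mem_Collect_eq by (elim conjE) (erule allE, erule mp)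

lemma tseqs_step: "t \<in> tseqs k i \<Longrightarrow> 1 \<le> j \<Longrightarrow> j \<le> i \<Longrightarrow> t j < t (Suc j)"
  by (simp add: tseqs_def)

lemma tseqs_mono:
  assumes "t \<in> tseqs k i" "1 \<le> j" "j \<le> j'" "j' \<le> i + 1"
  shows "t j + j' \<le> t j' + j"
  using assms(3,4)
proof (induction j' rule: dec_induct)
  case (step n)
  then have "t n < t (Suc n)"
    using assms(2) by (intro tseqs_step[OF assms(1)]) simp_all
  moreover have "t j + n \<le> t n + j"
    using step.IH step.prems by simp
  ultimately show ?case
    by linarith
qed simp

lemma tseqs_le:
  assumes t: "t \<in> tseqs k i"
  shows "t j \<le> k + 1"
proof (cases "1 \<le> j \<and> j \<le> i + 1")
  case True
  then show ?thesis
    using tseqs_mono[OF t, of j "i + 1"] t by (simp add: tseqs_def)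
next
  case False
  then have "j < 1 \<or> i + 1 < j"
    by auto
  then show ?thesis
    by (simp add: tseqs_outside[OF t])
qed

lemma finite_tseqs: "finite (tseqs k i)"
proof (rule finite_subset)
  show "tseqs k i \<subseteq> {f. (\<forall>j. j \<notin> {1..i + 1} \<longrightarrow> f j = 0) \<and> (\<forall>j. f j \<le> k + 1)}"
  proof
    fix t
    assume t: "t \<in> tseqs k i"
    have "j \<notin> {1..i + 1} \<Longrightarrow> t j = 0" for j
      by (rule tseqs_outside[OF t]) auto
    then show "t \<in> {f. (\<forall>j. j \<notin> {1..i + 1} \<longrightarrow> f j = 0) \<and> (\<forall>j. f j \<le> k + 1)}"
      using tseqs_le[OF t] by blast
  qed
qed (rule finite_bounded_funs_with_support, simp)

lemma tseqs_empty: "k < i \<Longrightarrow> tseqs k i = {}"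
proof (rule ccontr)
  assume "k < i" "tseqs k i \<noteq> {}"
  then obtain t where t: "t \<in> tseqs k i"
    by auto
  have "t 1 + (i + 1) \<le> t (i + 1) + 1"
    by (rule tseqs_mono[OF t]) simp_all
  then show False
    using t \<open>k < i\<close> by (simp add: tseqs_def)
qed

lemma tseqs_Suc_0: "tseqs (Suc k) 0 = {}"
proof -
  have "t \<notin> tseqs (Suc k) 0" for t
    by (simp add: tseqs_def)
  then show ?thesis
    by blast
qed

lemma tseqs_0_0: "tseqs 0 0 = {\<lambda>j. if j = 1 then 1 else 0}"
proof (intro set_eqI iffI)
  fix t
  assume t: "t \<in> tseqs 0 0"
  have "t j = (if j = 1 then 1 else 0)" for j
  proof (cases "j = 1")
    case False
    then have "j < 1 \<or> 0 + 1 < j"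
      by arith
    then show ?thesis
      using False tseqs_outside[OF t] by simp
  qed (use t in \<open>simp add: tseqs_def\<close>)
  then show "t \<in> {\<lambda>j. if j = 1 then 1 else 0}"
    by auto
qed (simp add: tseqs_def)

lemma tseqs_change_last:
  assumes t: "t \<in> tseqs k i" and "1 \<le> i" "t i \<le> k'"
  shows "t(i + 1 := k' + 1) \<in> tseqs k' i"
  unfolding tseqs_def mem_Collect_eq
proof (intro conjI allI impI)
  show "(t(i + 1 := k' + 1)) 1 = 1"
    using t \<open>1 \<le> i\<close> by (simp add: tseqs_def)
  fix j
  show "(t(i + 1 := k' + 1)) j < (t(i + 1 := k' + 1)) (Suc j)" if "1 \<le> j \<and> j \<le> i"
    using t that \<open>t i \<le> k'\<close> by (cases "j = i") (simp_all add: tseqs_def)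
  show "(t(i + 1 := k' + 1)) j = 0" if "j < 1 \<or> i + 1 < j"
    using that tseqs_outside[OF t, of j] by auto
qed simp

lemma tseqs_extend:
  assumes t: "t \<in> tseqs k i" and "k < k'"
  shows "t(i + 2 := k' + 1) \<in> tseqs k' (i + 1)"
  unfolding tseqs_def mem_Collect_eq
proof (intro conjI allI impI)
  show "(t(i + 2 := k' + 1)) 1 = 1"
    using t by (simp add: tseqs_def)
  fix j
  show "(t(i + 2 := k' + 1)) j < (t(i + 2 := k' + 1)) (Suc j)" if "1 \<le> j \<and> j \<le> i + 1"
    using t that \<open>k < k'\<close> by (cases "j = i + 1") (simp_all add: tseqs_def)
  show "(t(i + 2 := k' + 1)) j = 0" if "j < 1 \<or> i + 1 + 1 < j"
    using that tseqs_outside[OF t, of j] by auto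
qed simp

lemma tseqs_truncate:
  assumes t: "t \<in> tseqs k' (i + 1)" and "t (i + 1) = k + 1"
  shows "t(i + 2 := 0) \<in> tseqs k i"
  unfolding tseqs_def mem_Collect_eq
proof (intro conjI allI impI)
  show "(t(i + 2 := 0)) 1 = 1"
    using t by (simp add: tseqs_def)
  fix j
  show "(t(i + 2 := 0)) j < (t(i + 2 := 0)) (Suc j)" if "1 \<le> j \<and> j \<le> i"
    using t that by (simp add: tseqs_def)
  show "(t(i + 2 := 0)) j = 0" if "j < 1 \<or> i + 1 < j"
    using that tseqs_outside[OF t, of j] by auto
qed (use assms(2) in simp)

definition tseq_factor :: "nat \<Rightarrow> rat fls fps" where
  "tseq_factor j = fps_const (qint j) * inverse (1 - fps_const (qint (j + 1)) * fps_X)"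

definition tseq_weight :: "nat \<Rightarrow> nat \<Rightarrow> (nat \<Rightarrow> nat) \<Rightarrow> rat fls fps" where
  "tseq_weight k i t
     = fps_const ((-1) ^ (k + i) * fls_X_intpow (- (int i * int k) + (\<Sum>j=1..i. int (t j))))
       * (\<Prod>j=1..i. tseq_factor j ^ (t (j + 1) - t j))"

definition tseq_sum :: "nat \<Rightarrow> nat \<Rightarrow> rat fls fps" where
  "tseq_sum k i = (\<Sum>t\<in>tseqs k i. tseq_weight k i t)"

lemma tseq_sum_0_0: "tseq_sum 0 0 = 1"
  by (simp add: tseq_sum_def tseq_weight_def tseqs_0_0)

lemma tseq_sum_Suc_0: "tseq_sum (Suc k) 0 = 0"
  by (simp add: tseq_sum_def tseqs_Suc_0)

lemma tseq_sum_eq_0: "k < i \<Longrightarrow> tseq_sum k i = 0"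
  by (simp add: tseq_sum_def tseqs_empty)

lemma tseq_weight_truncate:
  assumes t: "t \<in> tseqs (Suc k) (Suc i)" and last: "t (Suc i) = Suc k"
  shows "tseq_weight (Suc k) (Suc i) t
       = fps_const (up_coeff (Suc i)) * geo_factor (Suc i) * tseq_weight k i (t(i + 2 := 0))"
proof -
  define S where "S = (\<Sum>j=1..i. int (t j))"
  define P where "P = (\<Prod>j=1..i. tseq_factor j ^ (t (j + 1) - t j))"
  have "t (Suc (Suc i)) = Suc (Suc k)"
    using t by (simp add: tseqs_def)
  then have "tseq_weight (Suc k) (Suc i) t
      = fps_const ((-1) ^ (k + i) * fls_X_intpow (- (int (Suc i) * int (Suc k)) + (S + int (Suc k))))
        * (P * tseq_factor (Suc i))"
    using last by (simp add: tseq_weight_def S_def P_def)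
  also have "- (int (Suc i) * int (Suc k)) + (S + int (Suc k)) = (- int i) + (- (int i * int k) + S)"
    by (simp add: algebra_simps)
  also have "fps_const ((-1) ^ (k + i) * fls_X_intpow (- int i + (- (int i * int k) + S)))
        * (P * tseq_factor (Suc i))
      = fps_const (fls_X_intpow (- int i) * qint (Suc i)) * geo_factor (Suc i)
        * (fps_const ((-1) ^ (k + i) * fls_X_intpow (- (int i * int k) + S)) * P)"
    unfolding fls_X_intpow_times_fls_X_intpow[symmetric] tseq_factor_def by (simp add: ac_simps)
  also have "\<dots> = fps_const (up_coeff (Suc i)) * geo_factor (Suc i) * tseq_weight k i (t(i + 2 := 0))"
    by (simp add: tseq_weight_def up_coeff_def S_def P_def)
  finally show ?thesis .
qed

lemma tseq_weight_lower_last: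
  assumes t: "t \<in> tseqs (Suc k) (Suc i)" and last: "t (Suc i) \<noteq> Suc k"
  shows "tseq_weight (Suc k) (Suc i) t
       = fps_const (stay_coeff (Suc i)) * geo_factor (Suc i) * tseq_weight k (Suc i) (t(i + 2 := Suc k))"
proof -
  define S where "S = (\<Sum>j=1..Suc i. int (t j))"
  define P where "P = (\<Prod>j=1..i. tseq_factor j ^ (t (j + 1) - t j))"
  have t_end: "t (Suc (Suc i)) = Suc (Suc k)"
    using t by (simp add: tseqs_def)
  moreover have "t (Suc i) < t (Suc (Suc i))"
    by (rule tseqs_step[OF t]) simp_all
  ultimately have exponent: "Suc (Suc k) - t (Suc i) = Suc (Suc k - t (Suc i))"
    using last by simp
  have "tseq_weight (Suc k) (Suc i) t
      = fps_const ((-1) ^ (Suc k + Suc i) * fls_X_intpow (- (int (Suc i) * int (Suc k)) + S))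
        * (P * tseq_factor (Suc i) ^ (Suc (Suc k) - t (Suc i)))"
    using t_end by (simp add: tseq_weight_def S_def P_def)
  also have "- (int (Suc i) * int (Suc k)) + S = (- int (Suc i)) + (- (int (Suc i) * int k) + S)"
    by (simp add: algebra_simps)
  also have "fps_const ((-1) ^ (Suc k + Suc i)
          * fls_X_intpow (- int (Suc i) + (- (int (Suc i) * int k) + S)))
        * (P * tseq_factor (Suc i) ^ (Suc (Suc k) - t (Suc i)))
      = fps_const (- (fls_X_intpow (- int (Suc i)) * qint (Suc i))) * geo_factor (Suc i)
        * (fps_const ((-1) ^ (k + Suc i) * fls_X_intpow (- (int (Suc i) * int k) + S))
           * (P * tseq_factor (Suc i) ^ (Suc k - t (Suc i))))"
    unfolding fls_X_intpow_times_fls_X_intpow[symmetric] exponent power_Suc tseq_factor_def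
    by (simp add: ac_simps)
  also have "\<dots>
      = fps_const (stay_coeff (Suc i)) * geo_factor (Suc i) * tseq_weight k (Suc i) (t(i + 2 := Suc k))"
    by (simp add: tseq_weight_def stay_coeff_def S_def P_def)
  finally show ?thesis .
qed

lemma sum_tseqs_last_eq:
  "(\<Sum>t\<in>tseqs (Suc k) (Suc i) \<inter> {t. t (Suc i) = Suc k}. tseq_weight (Suc k) (Suc i) t)
     = fps_const (up_coeff (Suc i)) * geo_factor (Suc i) * tseq_sum k i"
  unfolding tseq_sum_def sum_distrib_left
proof (rule sum.reindex_bij_witness[where j = "\<lambda>t. t(i + 2 := 0)" and i = "\<lambda>s. s(i + 2 := k + 2)"])
  fix t
  assume t: "t \<in> tseqs (Suc k) (Suc i) \<inter> {t. t (Suc i) = Suc k}"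
  then show "(t(i + 2 := 0))(i + 2 := k + 2) = t"
    by (auto simp: tseqs_def)
  show "t(i + 2 := 0) \<in> tseqs k i"
    using t tseqs_truncate[of t "Suc k" i k] by simp
  show "fps_const (up_coeff (Suc i)) * geo_factor (Suc i) * tseq_weight k i (t(i + 2 := 0))
      = tseq_weight (Suc k) (Suc i) t"
    using t tseq_weight_truncate by simp
next
  fix s
  assume s: "s \<in> tseqs k i"
  then show "(s(i + 2 := k + 2))(i + 2 := 0) = s"
    using tseqs_outside[OF s, of "i + 2"] by auto
  show "s(i + 2 := k + 2) \<in> tseqs (Suc k) (Suc i) \<inter> {t. t (Suc i) = Suc k}"
    using s tseqs_extend[OF s, of "Suc k"] by (simp add: tseqs_def)
qed

lemma sum_tseqs_last_less:
  "(\<Sum>t\<in>tseqs (Suc k) (Suc i) - {t. t (Suc i) = Suc k}. tseq_weight (Suc k) (Suc i) t)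
     = fps_const (stay_coeff (Suc i)) * geo_factor (Suc i) * tseq_sum k (Suc i)"
  unfolding tseq_sum_def sum_distrib_left
proof (rule sum.reindex_bij_witness[where j = "\<lambda>t. t(i + 2 := Suc k)" and i = "\<lambda>s. s(i + 2 := k + 2)"])
  fix t
  assume t: "t \<in> tseqs (Suc k) (Suc i) - {t. t (Suc i) = Suc k}"
  then show "(t(i + 2 := Suc k))(i + 2 := k + 2) = t"
    by (auto simp: tseqs_def)
  have "t (Suc i) < t (i + 2)"
    using t tseqs_step[of t "Suc k" "Suc i" "Suc i"] by simp
  then show "t(i + 2 := Suc k) \<in> tseqs k (Suc i)"
    using t tseqs_change_last[of t "Suc k" "Suc i" k] by (simp add: tseqs_def)
  show "fps_const (stay_coeff (Suc i)) * geo_factor (Suc i) * tseq_weight k (Suc i) (t(i + 2 := Suc k))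
      = tseq_weight (Suc k) (Suc i) t"
    using t tseq_weight_lower_last by simp
next
  fix s
  assume s: "s \<in> tseqs k (Suc i)"
  then have "s (Suc i) < s (i + 2)" "s (i + 2) = Suc k"
    using tseqs_step[OF s, of "Suc i"] by (simp_all add: tseqs_def)
  then show "(s(i + 2 := k + 2))(i + 2 := Suc k) = s"
    "s(i + 2 := k + 2) \<in> tseqs (Suc k) (Suc i) - {t. t (Suc i) = Suc k}"
    using tseqs_change_last[OF s, of "Suc k"] by auto
qed

lemma tseq_sum_Suc_Suc:
  "tseq_sum (Suc k) (Suc i)
     = fps_const (up_coeff (Suc i)) * geo_factor (Suc i) * tseq_sum k i
     + fps_const (stay_coeff (Suc i)) * geo_factor (Suc i) * tseq_sum k (Suc i)"
  unfolding tseq_sum_def[of "Suc k"] sum.Int_Diff[OF finite_tseqs, of _ _ _ "{t. t (Suc i) = Suc k}"]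
  by (simp only: sum_tseqs_last_eq sum_tseqs_last_less)

lemma eig_coeff_gf_eq_tseq_sum: "eig_coeff_gf k i = inverse (1 - fps_X) * tseq_sum k i"
proof (induction k arbitrary: i)
  case 0
  then show ?case
    by (cases "i = 0") (simp_all add: eig_coeff_gf_0 tseq_sum_0_0 tseq_sum_eq_0)
next
  case (Suc k)
  then show ?case
    by (cases i) (simp_all add: eig_coeff_gf_Suc tseq_sum_Suc_0 tseq_sum_Suc_Suc algebra_simps)
qed

lemma A_gf_eq_eig_coeff_gf: "A_gf k = fps_X ^ k * (\<Sum>j\<le>k. eig_coeff_gf k j)"
proof (rule fps_ext)
  fix n
  show "A_gf k $ n = (fps_X ^ k * (\<Sum>j\<le>k. eig_coeff_gf k j)) $ n"
  proof (cases "n < k")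
    case True
    then show ?thesis
      by (simp add: A_gf_def A_kn_def fps_X_power_mult_nth LeDiagrams_empty)
  next
    case False
    then obtain m where "n = k + m"
      using le_Suc_ex by fastforce
    then show ?thesis
      by (simp add: A_gf_def fps_X_power_mult_nth fps_sum_nth eig_coeff_gf_def A_kn_eq_eig_coeff_sum)
  qed
qed

theorem mainTheorem4:
  fixes k :: nat
  assumes "k \<ge> 1"
  shows "A_gf k =
    (\<Sum>i=1..k. \<Sum>t\<in>tseqs k i.
       fps_const ((-1) ^ (k + i) * fls_X_intpow (- (int i * int k) + (\<Sum>j=1..i. int (t j))))
       * fps_X ^ k * inverse (1 - fps_X)
       * (\<Prod>j=1..i. (fps_const (qint j) * inverse (1 - fps_const (qint (j + 1)) * fps_X))
                        ^ (t (j + 1) - t j)))"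
proof -
  have "{..k} = insert 0 {1..k}"
    by auto
  moreover have "tseq_sum k 0 = 0"
    using assms tseq_sum_Suc_0 by (cases k) auto
  ultimately have "A_gf k = (\<Sum>i=1..k. fps_X ^ k * inverse (1 - fps_X) * tseq_sum k i)"
    by (simp add: A_gf_eq_eig_coeff_gf eig_coeff_gf_eq_tseq_sum sum_distrib_left mult.assoc)
  then show ?thesis
    by (simp add: tseq_sum_def tseq_weight_def tseq_factor_def sum_distrib_left ac_simps)
qed

end
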